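(* For every integer $r\ge 1$, $$\sum_{n=1}^{\infty}\frac{n4^n}{(2n-1)^2(2n+1)(4n+2r+1)}\frac{\binom{2n}{n}}{\binom{4n+2r}{2n+r}}=\frac{\sqrt{2}}{2}\sum_{k=0}^{r+1}\frac{(-1)^k}{(2k+1)2^{2r-k+1}}\binom{r+1}{k}\mathcal{B}(k)+\frac{\varphi(2r+1)}{2^{2r+3}}-\frac{1}{2^{3/2}}\sum_{k=0}^{r-1}\frac{(-1)^k}{(2k+1)2^{2r-k+1}}\binom{r-1}{k}\mathcal{B}(k),$$ where $\mathcal{B}(k)=\int_0^{1/2}\frac{t^k}{\sqrt{1-t}}\,\mathrm{d}t$ and $\varphi(2k+1)=\int_0^1 t^{2k+1}\sqrt{1+t^2}\,\mathrm{d}t$. *)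

theory Defs
  imports "HOL-Analysis.Analysis"
begin

definition calB :: "nat \<Rightarrow> real" where
  "calB k = integral {0..1/2} (\<lambda>t. t ^ k / sqrt (1 - t))"

definition varphi :: "nat \<Rightarrow> real" where
  "varphi m = integral {0..1} (\<lambda>t. t ^ m * sqrt (1 + t^2))"

end

theory Submission
  imports Defs
begin

(* Since 1 / binom(2N, N) = (2N+1) / 4^N * int_0^1 (1 - y^2)^N dy (a Wallis integral), the n-th
   summand (n = m + 1, N = 2n + r) is the integral over [0,1] of
   binom(2m, m) / 4^m / (2 (2m+1) (2m+3) 4^r) * s^(2m+2+r) with s = 1 - y^2.
   By the M-test the sum may be taken under the integral.  Integrating the binomial series
   1 / sqrt(1 - s^2) = sum binom(2m, m) / 4^m * s^(2m) termwise gives arcsin s and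
   (arcsin s - s sqrt(1 - s^2)) / 2, and a partial fraction decomposition of 1 / ((2m+1)(2m+3))
   then sums the integrand to
   ((2 s^(r+1) - s^(r-1)) arcsin s + s^r sqrt(1 - s^2)) / (8 4^r).
   Expanding (1 - y^2)^m and integrating y^(2k) arcsin(1 - y^2) by parts leads to B(k) through
   t = y^2 / 2, and the square root term gives varphi(2r+1) through u = 1 - y^2, u = t^2. *)

definition wallis_ratio :: "nat \<Rightarrow> real" where
  "wallis_ratio m = real ((2*m) choose m) / 4^m"

lemma wallis_ratio_pochhammer: "wallis_ratio m = pochhammer (1/2) m / fact m"
proof -
  have "real ((2*m) choose m) = fact (2*m) / (fact m * fact m)"
    using binomial_fact[of m "2*m", where 'a=real] by simp
  also have "\<dots> = 4^m * pochhammer (1/2) m / fact m"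
    unfolding fact_double[of m] power_mult by (simp add: field_simps)
  finally show ?thesis unfolding wallis_ratio_def by (simp add: field_simps)
qed

lemma wallis_ratio_Suc: "wallis_ratio (Suc m) = wallis_ratio m * (2 * real m + 1) / (2 * real m + 2)"
  unfolding wallis_ratio_pochhammer pochhammer_Suc fact_Suc by (simp add: field_simps)

lemma wallis_ratio_pos: "0 < wallis_ratio m"
  by (simp add: wallis_ratio_def)

lemma wallis_ratio_le_1: "wallis_ratio m \<le> 1"
proof -
  have "real ((2*m) choose m) \<le> 2 ^ (2*m)"
    using binomial_le_pow2[of "2*m" m] by (metis of_nat_le_iff of_nat_numeral of_nat_power)
  then show ?thesis by (simp add: wallis_ratio_def power_mult)
qed

lemma gbinomial_minus_half: "(-1/2 :: real) gchoose m = (-1)^m * wallis_ratio m"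
  unfolding gbinomial_pochhammer wallis_ratio_pochhammer by simp

lemma wallis_ratio_sums:
  fixes x :: real
  assumes "\<bar>x\<bar> < 1"
  shows "(\<lambda>m. wallis_ratio m * x^(2*m)) sums (1 / sqrt (1 - x^2))"
proof -
  have x2: "x^2 < 1" using assms by (simp add: abs_square_less_1)
  then have "\<bar>-(x^2)\<bar> < 1" by simp
  from gen_binomial_real[OF this, of "-1/2"]
  have "(\<lambda>m. ((-1/2) gchoose m) * (-(x^2))^m) sums (1 + -(x^2)) powr (-1/2)" .
  moreover have "((-1/2) gchoose m) * (-(x^2))^m = wallis_ratio m * x^(2*m)" for m
    unfolding gbinomial_minus_half power_minus[of "x^2"] power_mult[symmetric]
    by (simp add: minus_one_mult_self)
  moreover have "(1 + -(x^2)) powr (-1/2) = 1 / sqrt (1 - x^2)"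
    using x2 by (simp add: powr_minus_divide powr_half_sqrt)
  ultimately show ?thesis by simp
qed

lemma wallis_series_has_derivative:
  fixes x :: real and j :: nat
  assumes "\<bar>x\<bar> < 1"
  defines "f \<equiv> \<lambda>y. \<Sum>m. wallis_ratio m * y^(2*m+2*j+1) / (2*m+2*j+1)"
  shows "summable (\<lambda>m. wallis_ratio m * x^(2*m+2*j+1) / (2*m+2*j+1))"
    and "(f has_real_derivative x^(2*j) / sqrt (1 - x^2)) (at x)"
proof -
  define \<rho> where "\<rho> = (1 + \<bar>x\<bar>) / 2"
  have \<rho>: "\<bar>x\<bar> < \<rho>" "\<rho> < 1" using assms by (auto simp: \<rho>_def)
  define S where "S = {-\<rho>..\<rho>}"
  define g where "g m y = wallis_ratio m * y^(2*m+2*j+1) / (2*m+2*j+1)" for m y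
  define g' where "g' m y = wallis_ratio m * y^(2*m+2*j)" for m and y :: real
  have der: "(g m has_field_derivative g' m y) (at y within S)" for m y
  proof -
    have "(g m has_field_derivative
        wallis_ratio m * (real (2*m+2*j+1) * y^(2*m+2*j)) / (2*m+2*j+1)) (at y within S)"
      unfolding g_def using DERIV_pow[of "2*m+2*j+1" y S] by (intro DERIV_cdivide DERIV_cmult) simp
    then show ?thesis by (simp add: g'_def)
  qed
  have unif: "uniformly_convergent_on S (\<lambda>n y. \<Sum>i<n. g' i y)"
  proof (rule Weierstrass_m_test')
    show "summable (\<lambda>n. (\<rho>^2)^n)"
      using \<rho> by (intro summable_geometric) (simp add: abs_square_less_1)
    fix n y assume "y \<in> S"
    then have "\<bar>y\<bar> \<le> \<rho>" by (auto simp: S_def)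
    have "norm (g' n y) = wallis_ratio n * \<bar>y\<bar>^(2*n+2*j)"
      using wallis_ratio_pos[of n] by (simp add: g'_def abs_mult power_abs)
    also have "\<dots> \<le> 1 * \<rho>^(2*n+2*j)"
      using wallis_ratio_le_1 wallis_ratio_pos \<open>\<bar>y\<bar> \<le> \<rho>\<close>
      by (intro mult_mono power_mono) (auto intro: less_imp_le)
    also have "\<dots> \<le> \<rho>^(2*n)"
      using \<rho> by (simp add: power_decreasing)
    finally show "norm (g' n y) \<le> (\<rho>^2)^n" by (simp add: power_mult)
  qed
  have "convex S" "0 \<in> S" "summable (\<lambda>n. g n 0)" "x \<in> interior S"
    using \<rho> by (auto simp: S_def g_def)
  note series = has_field_derivative_series'[OF \<open>convex S\<close> der unif \<open>0 \<in> S\<close>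
      \<open>summable (\<lambda>n. g n 0)\<close> \<open>x \<in> interior S\<close>]
  show "summable (\<lambda>m. wallis_ratio m * x^(2*m+2*j+1) / (2*m+2*j+1))"
    using series(1) by (simp add: g_def)
  have "(\<lambda>n. x^(2*j) * (wallis_ratio n * x^(2*n))) sums (x^(2*j) * (1 / sqrt (1 - x^2)))"
    by (intro sums_mult wallis_ratio_sums assms)
  then have "(\<Sum>n. g' n x) = x^(2*j) / sqrt (1 - x^2)"
    by (simp add: g'_def sums_iff power_add mult_ac)
  with series(2) show "(f has_real_derivative x^(2*j) / sqrt (1 - x^2)) (at x)"
    by (simp add: f_def g_def[abs_def])
qed

lemma wallis_series_sums_primitive:
  fixes F :: "real \<Rightarrow> real" and s :: real
  assumes "\<bar>s\<bar> < 1" and "F 0 = 0"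
    and F': "\<And>x. \<bar>x\<bar> < 1 \<Longrightarrow> (F has_real_derivative x^(2*j) / sqrt (1 - x^2)) (at x)"
  shows "(\<lambda>m. wallis_ratio m * s^(2*m+2*j+1) / (2*m+2*j+1)) sums F s"
proof -
  define f where "f y = (\<Sum>m. wallis_ratio m * y^(2*m+2*j+1) / (2*m+2*j+1))" for y :: real
  have "\<exists>c. \<forall>x\<in>{-1<..<1}. f x - F x = c"
  proof (rule has_field_derivative_zero_constant)
    fix x :: real assume "x \<in> {-1<..<1}"
    then have "\<bar>x\<bar> < 1" by auto
    have "((\<lambda>x. f x - F x) has_field_derivative
        x^(2*j) / sqrt (1 - x^2) - x^(2*j) / sqrt (1 - x^2)) (at x)"
      using wallis_series_has_derivative(2)[OF \<open>\<bar>x\<bar> < 1\<close>] F'[OF \<open>\<bar>x\<bar> < 1\<close>]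
      unfolding f_def by (intro DERIV_diff)
    then show "((\<lambda>x. f x - F x) has_field_derivative 0) (at x within {-1<..<1})"
      by (simp add: has_field_derivative_at_within)
  qed simp
  then obtain c where c: "\<And>x. x \<in> {-1<..<1} \<Longrightarrow> f x - F x = c" by blast
  have "c = 0" using c[of 0] \<open>F 0 = 0\<close> by (simp add: f_def)
  then have "f s = F s" using c[of s] assms(1) by (auto simp: abs_less_iff)
  with wallis_series_has_derivative(1)[OF assms(1)] show ?thesis
    by (simp add: f_def sums_iff)
qed

lemma arcsin_sums:
  fixes s :: real
  assumes "\<bar>s\<bar> < 1"
  shows "(\<lambda>m. wallis_ratio m * s^(2*m+1) / (2*m+1)) sums arcsin s"
proof -
  have "(\<lambda>m. wallis_ratio m * s^(2*m+2*0+1) / (2*m+2*0+1)) sums arcsin s"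
    by (rule wallis_series_sums_primitive[OF assms])
      (auto simp: abs_less_iff intro!: DERIV_arcsin[unfolded inverse_eq_divide])
  then show ?thesis by simp
qed

lemma arcsin_minus_sqrt_sums:
  fixes s :: real
  assumes "\<bar>s\<bar> < 1"
  shows "(\<lambda>m. wallis_ratio m * s^(2*m+3) / (2*m+3)) sums ((arcsin s - s * sqrt (1 - s^2)) / 2)"
proof -
  have "((\<lambda>x. (arcsin x - x * sqrt (1 - x^2)) / 2) has_real_derivative x^2 / sqrt (1 - x^2)) (at x)"
    if "\<bar>x\<bar> < 1" for x :: real
  proof -
    have "0 < 1 - x^2" using that by (simp add: abs_square_less_1)
    then have "((\<lambda>x. (arcsin x - x * sqrt (1 - x^2)) / 2) has_real_derivative
        (inverse (sqrt (1 - x^2))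
          - (sqrt (1 - x^2) + x * (inverse (sqrt (1 - x^2)) / 2 * - (2 * x)))) / 2) (at x)"
      using that by (auto intro!: derivative_eq_intros simp: abs_less_iff)
    moreover have "(inverse (sqrt (1 - x^2))
          - (sqrt (1 - x^2) + x * (inverse (sqrt (1 - x^2)) / 2 * - (2 * x)))) / 2
        = x^2 / sqrt (1 - x^2)"
      using \<open>0 < 1 - x^2\<close> by (simp add: field_simps power2_eq_square)
    ultimately show ?thesis by simp
  qed
  then show ?thesis
    using wallis_series_sums_primitive[OF assms, of "\<lambda>x. (arcsin x - x * sqrt (1 - x^2)) / 2" 1]
    by (simp add: numeral_3_eq_3)
qed

lemma wallis_series_arcsin:
  fixes s :: real
  assumes "0 < s" "s < 1"
  shows "(\<lambda>m. wallis_ratio m * s^(2*m+2) / (2*(2*real m+1)*(2*real m+3))) sums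
    (s/4 * arcsin s - (arcsin s - s * sqrt (1 - s^2)) / (8 * s))"
proof -
  have "\<bar>s\<bar> < 1" using assms by simp
  then have "(\<lambda>m. s/4 * (wallis_ratio m * s^(2*m+1) / (2*m+1))
      - 1/(4 * s) * (wallis_ratio m * s^(2*m+3) / (2*m+3)))
    sums (s/4 * arcsin s - 1/(4 * s) * ((arcsin s - s * sqrt (1 - s^2)) / 2))"
    by (intro sums_diff sums_mult arcsin_sums arcsin_minus_sqrt_sums)
  moreover have "s/4 * (wallis_ratio m * s^(2*m+1) / (2*m+1))
      - 1/(4 * s) * (wallis_ratio m * s^(2*m+3) / (2*m+3))
    = wallis_ratio m * s^(2*m+2) / (2*(2*real m+1)*(2*real m+3))" for m
  proof -
    define A where "A = wallis_ratio m * s^(2*m+1)"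
    have "wallis_ratio m * s^(2*m+3) = A * s^2" "wallis_ratio m * s^(2*m+2) = A * s"
      by (simp_all add: A_def power_add power2_eq_square numeral_3_eq_3)
    moreover have "0 < 2 * real m + 1" "0 < 2 * real m + 3" by simp_all
    ultimately show ?thesis
      using assms by (simp add: A_def[symmetric] divide_simps) (simp add: algebra_simps power2_eq_square)
  qed
  moreover have "s/4 * arcsin s - 1/(4 * s) * ((arcsin s - s * sqrt (1 - s^2)) / 2)
      = s/4 * arcsin s - (arcsin s - s * sqrt (1 - s^2)) / (8 * s)"
    by simp
  ultimately show ?thesis by simp
qed

lemma wallis_integrand_sums:
  fixes s :: real
  assumes "1 \<le> r" "0 < s" "s < 1"
  shows "(\<lambda>m. wallis_ratio m / (2*(2*real m+1)*(2*real m+3)*4^r) * s^(2*m+2+r)) sums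
    ((2 * (s^(r+1) * arcsin s) - s^(r-1) * arcsin s + s^r * sqrt (1 - s^2)) / (8*4^r))"
proof -
  have "(\<lambda>m. s^r/4^r * (wallis_ratio m * s^(2*m+2) / (2*(2*real m+1)*(2*real m+3)))) sums
    (s^r/4^r * (s/4 * arcsin s - (arcsin s - s * sqrt (1 - s^2)) / (8 * s)))"
    using assms by (intro sums_mult wallis_series_arcsin)
  moreover have "s^r/4^r * (wallis_ratio m * s^(2*m+2) / (2*(2*real m+1)*(2*real m+3)))
      = wallis_ratio m / (2*(2*real m+1)*(2*real m+3)*4^r) * s^(2*m+2+r)" for m
    by (simp add: power_add mult_ac)
  moreover have "s^r/4^r * (s/4 * arcsin s - (arcsin s - s * sqrt (1 - s^2)) / (8 * s))
      = (2 * (s^(r+1) * arcsin s) - s^(r-1) * arcsin s + s^r * sqrt (1 - s^2)) / (8*4^r)"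
  proof -
    obtain r' where r': "r = Suc r'" using assms by (cases r) auto
    have "s^r/4^r * (s/4 * arcsin s - (arcsin s - s * sqrt (1 - s^2)) / (8 * s))
      = s^r' * (2 * s^2 * arcsin s - arcsin s + s * sqrt (1 - s^2)) / (8*4^r)"
      using assms unfolding r' by (simp add: field_simps power2_eq_square)
    also have "\<dots> = (2 * (s^(r+1) * arcsin s) - s^(r-1) * arcsin s + s^r * sqrt (1 - s^2)) / (8*4^r)"
      unfolding r' by (simp add: algebra_simps power2_eq_square)
    finally show ?thesis .
  qed
  ultimately show ?thesis by simp
qed

lemma integral_one_minus_square_power_Suc:
  "(2*N+3) * integral {0..1} (\<lambda>y::real. (1 - y^2)^Suc N)
    = (2*N+2) * integral {0..1} (\<lambda>y::real. (1 - y^2)^N)"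
proof -
  define f where "f N = (\<lambda>y::real. (1 - y^2)^N)" for N
  define h where "h y = (2*N+3) * f (Suc N) y - (2*N+2) * f N y" for y
  have "((\<lambda>y. y * f (Suc N) y) has_real_derivative h y) (at y within {0..1})" for y
  proof -
    have "((\<lambda>y. 1 - y^2) has_real_derivative - (2 * y)) (at y within {0..1})"
      using DERIV_diff[OF DERIV_const DERIV_pow[of 2 y]] by simp
    from DERIV_mult[OF DERIV_ident DERIV_power[OF this, of "Suc N"]]
    have "((\<lambda>y. y * f (Suc N) y) has_real_derivative
        1 * f (Suc N) y + y * (real (Suc N) * (1 - y^2)^N * (- (2 * y)))) (at y within {0..1})"
      by (simp add: f_def mult_ac)
    moreover have "1 * f (Suc N) y + y * (real (Suc N) * (1 - y^2)^N * (- (2 * y))) = h y"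
      unfolding h_def f_def power_Suc by (simp add: algebra_simps power2_eq_square)
    ultimately show ?thesis by simp
  qed
  then have "(h has_integral 1 * f (Suc N) 1 - 0 * f (Suc N) 0) {0..1}"
    by (intro fundamental_theorem_of_calculus) (auto simp: has_real_derivative_iff_has_vector_derivative)
  then have "(h has_integral 0) {0..1}" by (simp add: f_def)
  moreover have "(h has_integral (2*N+3) * integral {0..1} (f (Suc N)) - (2*N+2) * integral {0..1} (f N))
      {0..1}"
    unfolding h_def f_def
    by (intro has_integral_diff has_integral_mult_right integrable_integral
        integrable_continuous_interval continuous_intros)
  ultimately have "(2*N+3) * integral {0..1} (f (Suc N)) - (2*N+2) * integral {0..1} (f N) = 0"
    by (rule has_integral_unique[rotated])
  then show ?thesis by (simp add: f_def)
qed

lemma has_integral_one_minus_square_power: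
  "((\<lambda>y::real. (1 - y^2)^N) has_integral 1 / ((2 * real N + 1) * wallis_ratio N)) {0..1}"
proof -
  have "integral {0..1} (\<lambda>y::real. (1 - y^2)^N) = 1 / ((2 * real N + 1) * wallis_ratio N)"
  proof (induction N)
    case 0
    then show ?case by (simp add: wallis_ratio_def)
  next
    case (Suc N)
    have "integral {0..1} (\<lambda>y::real. (1 - y^2)^Suc N)
        = (2*N+2) / (2*N+3) * integral {0..1} (\<lambda>y::real. (1 - y^2)^N)"
      using integral_one_minus_square_power_Suc[of N] by (simp add: field_simps)
    also have "\<dots> = (2*N+2) / ((2*N+3) * ((2 * real N + 1) * wallis_ratio N))"
      by (simp add: Suc.IH)
    also have "\<dots> = 1 / ((2 * real (Suc N) + 1) * wallis_ratio (Suc N))"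
      using wallis_ratio_pos[of N] by (simp add: wallis_ratio_Suc field_simps)
    finally show ?case .
  qed
  moreover have "(\<lambda>y::real. (1 - y^2)^N) integrable_on {0..1}"
    by (intro integrable_continuous_interval continuous_intros)
  ultimately show ?thesis
    by (simp add: has_integral_integrable_integral)
qed

lemma wallis_integrand_has_integral:
  "((\<lambda>y::real. wallis_ratio m / (2*(2*real m+1)*(2*real m+3)*4^r) * (1 - y^2)^(2*m+2+r))
    has_integral
      (let n = m + 1 in
        (real n * 4 ^ n / ((2 * real n - 1)^2 * (2 * real n + 1) * (4 * real n + 2 * real r + 1)))
        * (real ((2*n) choose n) / real ((4*n + 2*r) choose (2*n + r))))) {0..1}"
proof -
  define n where "n = m + 1"
  define N where "N = 2*m+2+r"
  have "4*n + 2*r = 2*N" "2*n + r = N" "N = n + n + r"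
    by (simp_all add: n_def N_def)
  then have binomials: "real ((2*n) choose n) = 4^n * wallis_ratio n"
      "real ((4*n + 2*r) choose (2*n + r)) = 4^n * 4^n * 4^r * wallis_ratio N"
    by (simp_all only: wallis_ratio_def power_add) simp_all
  have casts: "2 * real n - 1 = 2 * real m + 1" "2 * real n + 1 = 2 * real m + 3"
      "4 * real n + 2 * real r + 1 = 2 * real N + 1" "real n = real m + 1"
    by (simp_all add: n_def N_def)
  have ratio: "wallis_ratio n = wallis_ratio m * (2 * real m + 1) / (2 * real m + 2)"
    by (simp add: n_def wallis_ratio_Suc)
  have "0 < wallis_ratio N" "(0::real) < 4^n" "(0::real) < 4^r"
      "0 < 2 * real m + 1" "0 < 2 * real m + 2" "0 < 2 * real m + 3" "0 < 2 * real N + 1"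
    by (simp_all add: wallis_ratio_pos)
  then have "(real n * 4 ^ n / ((2 * real n - 1)^2 * (2 * real n + 1) * (4 * real n + 2 * real r + 1)))
        * (real ((2*n) choose n) / real ((4*n + 2*r) choose (2*n + r)))
      = wallis_ratio m / (2*(2*real m+1)*(2*real m+3)*4^r) * (1 / ((2 * real N + 1) * wallis_ratio N))"
    unfolding binomials ratio casts(1-3) unfolding casts(4)
    by (simp add: divide_simps) (simp add: algebra_simps power2_eq_square)
  then show ?thesis
    unfolding Let_def n_def[symmetric] N_def[symmetric]
    by (rule ssubst) (rule has_integral_mult_right[OF has_integral_one_minus_square_power])
qed

lemma termwise_integral_sums:
  fixes f :: "nat \<Rightarrow> real \<Rightarrow> real"
  assumes cont: "\<And>n. continuous_on {a..b} (f n)"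
    and int: "\<And>n. (f n has_integral I n) {a..b}"
    and bound: "\<And>n x. x \<in> {a..b} \<Longrightarrow> norm (f n x) \<le> M n"
    and "summable M"
    and "finite S"
    and lim: "\<And>x. x \<in> {a..b} - S \<Longrightarrow> (\<lambda>n. f n x) sums g x"
    and g: "(g has_integral J) {a..b}"
  shows "I sums J"
proof -
  have u: "uniform_limit {a..b} (\<lambda>n x. \<Sum>i<n. f i x) (\<lambda>x. \<Sum>n. f n x) sequentially"
    by (rule Weierstrass_m_test[OF bound \<open>summable M\<close>])
  have c: "continuous_on {a..b} (\<lambda>x. \<Sum>i<n. f i x)" for n
    by (intro continuous_on_sum cont)
  obtain I' J' where I': "\<And>n. ((\<lambda>x. \<Sum>i<n. f i x) has_integral I' n) {a..b}"
    and J': "((\<lambda>x. \<Sum>n. f n x) has_integral J') {a..b}" and "I' \<longlonglongrightarrow> J'"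
    using uniform_limit_integral[OF u c sequentially_bot] by blast
  have "I' = (\<lambda>n. \<Sum>i<n. I i)"
    by (intro ext has_integral_unique[OF I' has_integral_sum[OF finite_lessThan int]])
  moreover have "((\<lambda>x. \<Sum>n. f n x) has_integral J) {a..b}"
  proof (rule has_integral_spike_finite[OF \<open>finite S\<close> _ g])
    show "(\<Sum>n. f n x) = g x" if "x \<in> {a..b} - S" for x
      using lim[OF that] by (simp add: sums_iff)
  qed
  then have "J' = J" by (rule has_integral_unique[OF J'])
  ultimately show ?thesis
    using \<open>I' \<longlonglongrightarrow> J'\<close> by (simp add: sums_def)
qed

lemma has_integral_odd_power_div_sqrt:
  "((\<lambda>y::real. y^(2*k+1) / sqrt (2 - y^2)) has_integral 2^k / sqrt 2 * calB k) {0..1}"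
proof -
  define f where "f = (\<lambda>t::real. t^k / sqrt (1 - t))"
  have "((\<lambda>y. y *\<^sub>R f (y^2/2)) has_integral integral {0^2/2..1^2/2} f) {0..1::real}"
  proof (rule has_integral_substitution[where c=0 and d="1/2"])
    show "(\<lambda>y::real. y^2/2) ` {0..1} \<subseteq> {0..1/2}"
      by (auto simp: power_le_one)
    show "continuous_on {0..1/2} f"
      unfolding f_def by (intro continuous_intros) auto
    show "((\<lambda>y. y^2/2) has_real_derivative y) (at y within {0..1})" for y :: real
      using DERIV_cdivide[OF DERIV_pow[of 2 y "{0..1}"], of 2] by simp
  qed simp_all
  then have "((\<lambda>y. 2^k / sqrt 2 * (y * f (y^2/2))) has_integral 2^k / sqrt 2 * calB k) {0..1::real}"
    by (intro has_integral_mult_right) (simp add: calB_def f_def)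
  moreover have "2^k / sqrt 2 * (y * f (y^2/2)) = y^(2*k+1) / sqrt (2 - y^2)"
    if "y \<in> {0..1}" for y :: real
  proof -
    have "y^2 \<le> 1" using that by (simp add: power_le_one)
    then have "sqrt (2 - y^2) > 0" by simp
    moreover have "sqrt (1 - y^2/2) = sqrt (2 - y^2) / sqrt 2"
      by (simp add: real_sqrt_divide[symmetric] field_simps)
    moreover have "(y^2/2)^k = y^(2*k) / 2^k" by (simp add: power_divide power_mult)
    moreover have "y^(2*k+1) = y * y^(2*k)" by simp
    ultimately show ?thesis
      unfolding f_def by (simp add: field_simps)
  qed
  ultimately show ?thesis by (rule has_integral_eq[rotated])
qed

lemma has_real_derivative_arcsin_one_minus_square:
  fixes y :: real
  assumes "0 < y" "y < 1"
  shows "((\<lambda>y. arcsin (1 - y^2)) has_real_derivative - 2 / sqrt (2 - y^2)) (at y)"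
proof -
  have "1 - (1 - y^2)^2 = y^2 * (2 - y^2)" by (simp add: algebra_simps power2_eq_square)
  then have sqrt_eq: "sqrt (1 - (1 - y^2)^2) = y * sqrt (2 - y^2)"
    using assms by (simp add: real_sqrt_mult)
  have "0 < y^2" "y^2 < 1" using assms by (auto simp: abs_square_less_1)
  then have "((\<lambda>y. arcsin (1 - y^2)) has_real_derivative
      inverse (sqrt (1 - (1 - y^2)^2)) * (- (2 * y))) (at y)"
    by (intro DERIV_chain2[OF DERIV_arcsin] derivative_eq_intros) auto
  moreover have "0 < sqrt (2 - y^2)" using \<open>y^2 < 1\<close> by simp
  ultimately show ?thesis
    using assms by (simp add: sqrt_eq field_simps)
qed

lemma has_integral_even_power_arcsin:
  "((\<lambda>y::real. y^(2*k) * arcsin (1 - y^2)) has_integral sqrt 2 * 2^k * calB k / (2*k+1)) {0..1}"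
proof -
  define F where "F y = y^(2*k+1) * arcsin (1 - y^2) / (2*k+1)" for y :: real
  define G where "G y = y^(2*k) * arcsin (1 - y^2) - 2 / (2*k+1) * (y^(2*k+1) / sqrt (2 - y^2))"
    for y :: real
  have "continuous_on {0..1} F"
    unfolding F_def
    by (intro continuous_intros) (auto intro: order_trans[OF power_le_one[of _ 2]])
  moreover have "(F has_real_derivative G y) (at y)" if "y \<in> {0<..<1}" for y
  proof -
    from that have y: "0 < y" "y < 1" by auto
    then have "0 < sqrt (2 - y^2)" using power_le_one[of y 2] by simp
    have "(F has_real_derivative
        (real (2*k+1) * y^(2*k) * arcsin (1 - y^2) + (- 2 / sqrt (2 - y^2)) * y^(2*k+1)) / (2*k+1))
        (at y)"
      unfolding F_def using DERIV_pow[of "2*k+1" y UNIV]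
      by (intro DERIV_cdivide DERIV_mult has_real_derivative_arcsin_one_minus_square y) simp
    moreover have "(real (2*k+1) * y^(2*k) * arcsin (1 - y^2) + (- 2 / sqrt (2 - y^2)) * y^(2*k+1))
        / (2*k+1) = G y"
      using \<open>0 < sqrt (2 - y^2)\<close> by (simp add: G_def divide_simps)
    ultimately show ?thesis by simp
  qed
  ultimately have "(G has_integral F 1 - F 0) {0..1}"
    by (intro fundamental_theorem_of_calculus_interior)
      (auto simp: has_real_derivative_iff_has_vector_derivative)
  then have "((\<lambda>y. G y + 2 / (2*k+1) * (y^(2*k+1) / sqrt (2 - y^2))) has_integral
      0 + 2 / (2*k+1) * (2^k / sqrt 2 * calB k)) {0..1}"
    by (intro has_integral_add has_integral_mult_right has_integral_odd_power_div_sqrt)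
      (simp add: F_def)
  then have "((\<lambda>y. y^(2*k) * arcsin (1 - y^2)) has_integral (2 / sqrt 2) * 2^k * calB k / (2*k+1))
      {0..1}"
    by (simp add: G_def mult_ac)
  moreover have "2 / sqrt 2 = sqrt (2::real)"
    by (metis real_div_sqrt zero_le_numeral)
  ultimately show ?thesis
    by simp
qed

definition arcsin_moment :: "nat \<Rightarrow> real" where
  "arcsin_moment m = sqrt 2 * (\<Sum>k=0..m. real (m choose k) * (-1)^k * 2^k * calB k / (2*k+1))"

lemma has_integral_power_arcsin:
  "((\<lambda>y::real. (1 - y^2)^m * arcsin (1 - y^2)) has_integral arcsin_moment m) {0..1}"
proof -
  define c where "c k = real (m choose k) * (-1)^k" for k
  have "(1 - y^2)^m = (\<Sum>k=0..m. c k * y^(2*k))" for y :: real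
  proof -
    have "(1 - y^2)^m = (-(y^2) + 1)^m" by simp
    also have "\<dots> = (\<Sum>k\<le>m. of_nat (m choose k) * (-(y^2))^k * 1^(m-k))"
      by (rule binomial_ring)
    also have "\<dots> = (\<Sum>k=0..m. c k * y^(2*k))"
      unfolding atLeast0AtMost c_def
      by (intro sum.cong refl, subst power_minus) (simp add: power_mult)
    finally show ?thesis .
  qed
  then have "(\<lambda>y::real. (1 - y^2)^m * arcsin (1 - y^2))
      = (\<lambda>y. \<Sum>k=0..m. c k * (y^(2*k) * arcsin (1 - y^2)))"
    by (simp add: sum_distrib_right mult.assoc)
  moreover have "((\<lambda>y. \<Sum>k=0..m. c k * (y^(2*k) * arcsin (1 - y^2))) has_integral
      (\<Sum>k=0..m. c k * (sqrt 2 * 2^k * calB k / (2*k+1)))) {0..1::real}"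
    by (intro has_integral_sum has_integral_mult_right has_integral_even_power_arcsin) auto
  moreover have "(\<Sum>k=0..m. c k * (sqrt 2 * 2^k * calB k / (2*k+1))) = arcsin_moment m"
    unfolding arcsin_moment_def c_def sum_distrib_left by (simp add: field_simps)
  ultimately show ?thesis by simp
qed

lemma varphi_odd_eq_half_integral:
  "varphi (2*r+1) = integral {0..1} (\<lambda>u. u^r * sqrt (1 + u)) / 2"
proof -
  define f where "f = (\<lambda>u::real. u^r * sqrt (1 + u))"
  have "((\<lambda>t. (2 * t) *\<^sub>R f (t^2)) has_integral integral {0^2..1^2} f) {0..1::real}"
  proof (rule has_integral_substitution[where c=0 and d=1])
    show "(\<lambda>t::real. t^2) ` {0..1} \<subseteq> {0..1}" by (auto simp: power_le_one)
    show "continuous_on {0..1} f" unfolding f_def by (intro continuous_intros)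
    show "((\<lambda>t. t^2) has_real_derivative 2 * t) (at t within {0..1})" for t :: real
      using DERIV_pow[of 2 t "{0..1}"] by simp
  qed auto
  from has_integral_divide[OF this, of 2]
  have "((\<lambda>t. t^(2*r+1) * sqrt (1 + t^2)) has_integral integral {0..1} f / 2) {0..1::real}"
    by (simp add: f_def power_mult[symmetric] mult_ac)
  then show ?thesis
    unfolding varphi_def f_def by (rule integral_unique)
qed

lemma has_integral_power_sqrt:
  "((\<lambda>y::real. (1 - y^2)^r * sqrt (1 - (1 - y^2)^2)) has_integral varphi (2*r+1)) {0..1}"
proof -
  define f where "f = (\<lambda>u::real. u^r * sqrt (1 + u))"
  have "((\<lambda>y. (- 2 * y) *\<^sub>R f (1 - y^2)) has_integral
      integral {1 - 0^2..1 - 1^2} f - integral {1 - 1^2..1 - 0^2} f) {0..1::real}"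
  proof (rule has_integral_substitution_general[where s="{}" and c=0 and d=1])
    show "(\<lambda>y::real. 1 - y^2) ` {0..1} \<subseteq> {0..1}" by (auto simp: power_le_one)
    show "continuous_on {0..1} f" unfolding f_def by (intro continuous_intros)
    show "continuous_on {0..1} (\<lambda>y::real. 1 - y^2)" by (intro continuous_intros)
    show "((\<lambda>y. 1 - y^2) has_real_derivative - 2 * y) (at y within {0..1})" for y :: real
      using DERIV_diff[OF DERIV_const DERIV_pow[of 2 y "{0..1}"]] by simp
  qed auto
  from has_integral_divide[OF this, of "- 2"]
  have "((\<lambda>y. y * f (1 - y^2)) has_integral varphi (2*r+1)) {0..1}"
    unfolding varphi_odd_eq_half_integral by (simp add: f_def)
  moreover have "y * f (1 - y^2) = (1 - y^2)^r * sqrt (1 - (1 - y^2)^2)" if "y \<in> {0..1}" for y :: real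
  proof -
    have "1 - (1 - y^2)^2 = y^2 * (2 - y^2)" by (simp add: algebra_simps power2_eq_square)
    with that show ?thesis by (simp add: f_def real_sqrt_mult)
  qed
  ultimately show ?thesis by (rule has_integral_eq[rotated])
qed

lemma wallis_integrand_bound:
  fixes y :: real
  assumes "y \<in> {0..1}"
  shows "norm (wallis_ratio m / (2*(2*real m+1)*(2*real m+3)*4^r) * (1 - y^2)^K)
    \<le> inverse (real (Suc m) ^ 2)"
proof -
  define D where "D = 2*(2*real m+1)*(2*real m+3)*4^r"
  have "0 \<le> 1 - y^2" "1 - y^2 \<le> 1" using assms by (auto simp: power_le_one)
  then have "\<bar>(1 - y^2)^K\<bar> \<le> 1" by (simp add: power_le_one)
  have "real (Suc m) ^ 2 \<le> 2*(2*real m+1)*(2*real m+3)"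
    using mult_nonneg_nonneg[of "real m" "real m"] by (simp add: power2_eq_square algebra_simps)
  also have "\<dots> \<le> D"
    by (simp add: D_def)
  finally have "real (Suc m) ^ 2 \<le> D" .
  have "wallis_ratio m / D \<le> 1 / D"
    using wallis_ratio_le_1[of m] by (intro divide_right_mono) (simp_all add: D_def)
  also have "\<dots> \<le> inverse (real (Suc m) ^ 2)"
    using \<open>real (Suc m) ^ 2 \<le> D\<close> by (simp add: inverse_eq_divide frac_le del: of_nat_Suc)
  finally have "wallis_ratio m / D \<le> inverse (real (Suc m) ^ 2)" .
  have "0 \<le> wallis_ratio m / D"
    using wallis_ratio_pos[of m] by (simp add: D_def)
  then have "norm (wallis_ratio m / D * (1 - y^2)^K) \<le> wallis_ratio m / D * 1"
    using \<open>\<bar>(1 - y^2)^K\<bar> \<le> 1\<close>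
    unfolding real_norm_def abs_mult abs_of_nonneg[OF \<open>0 \<le> wallis_ratio m / D\<close>]
    by (intro mult_left_mono)
  with \<open>wallis_ratio m / D \<le> inverse (real (Suc m) ^ 2)\<close> show ?thesis
    by (simp add: D_def)
qed

lemma arcsin_moment_combination:
  assumes "1 \<le> r"
  shows "(2 * arcsin_moment (r+1) - arcsin_moment (r-1) + varphi (2*r+1)) / (8*4^r)
    = sqrt 2 / 2 * (\<Sum>k=0..r+1. (-1)^k / ((2 * real k + 1) * 2 ^ (2*r - k + 1))
                                      * real ((r+1) choose k) * calB k)
          + varphi (2*r+1) / 2 ^ (2*r+3)
          - 1 / 2 powr (3/2) * (\<Sum>k=0..r-1. (-1)^k / ((2 * real k + 1) * 2 ^ (2*r - k + 1))
                                      * real ((r-1) choose k) * calB k)"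
proof -
  have pow: "(2::real) ^ (2*r - k + 1) = 2 * 4^r / 2^k" if "k \<le> r + 1" for k
  proof -
    have "2*r - k + 1 + k = 2*r + 1" using that assms by simp
    then have "(2::real) ^ (2*r - k + 1) * 2^k = 2 ^ (2*r + 1)"
      by (metis power_add)
    also have "\<dots> = 2 * 4^r" by (simp add: power_mult)
    finally show ?thesis by (simp add: field_simps)
  qed
  have "2 * arcsin_moment (r+1) / (8*4^r) = sqrt 2 / 2 *
      (\<Sum>k=0..r+1. (-1)^k / ((2 * real k + 1) * 2 ^ (2*r - k + 1)) * real ((r+1) choose k) * calB k)"
    unfolding arcsin_moment_def sum_distrib_left sum_divide_distrib
    by (intro sum.cong refl, subst pow) (auto simp: divide_simps mult_ac)
  moreover have "arcsin_moment (r-1) / (8*4^r) = 1 / 2 powr (3/2) *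
      (\<Sum>k=0..r-1. (-1)^k / ((2 * real k + 1) * 2 ^ (2*r - k + 1)) * real ((r-1) choose k) * calB k)"
  proof -
    have "(2::real) powr (3/2) = 2 powr (1 + 1/2)" by simp
    also have "\<dots> = 2 powr 1 * 2 powr (1/2)" by (rule powr_add)
    also have "\<dots> = 2 * sqrt 2" by (simp add: powr_half_sqrt)
    finally have powr_eq: "(2::real) powr (3/2) = 2 * sqrt 2" .
    have sqrt_sqrt: "sqrt 2 * (sqrt 2 * x) = (2::real) * x" for x
      by (simp flip: mult.assoc)
    show ?thesis
      unfolding arcsin_moment_def sum_distrib_left sum_divide_distrib powr_eq
      by (intro sum.cong refl, subst pow) (auto simp: divide_simps mult_ac sqrt_sqrt)
  qed
  moreover have "(2::real) ^ (2*r+3) = 8 * 4^r"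
    by (simp add: power_add power_mult)
  ultimately show ?thesis
    by (simp add: add_divide_distrib diff_divide_distrib)
qed

theorem theorem3p0p5:
  fixes r :: nat
  assumes "r \<ge> 1"
  shows "(\<lambda>m. let n = m + 1 in
            (real n * 4 ^ n / ((2 * real n - 1)^2 * (2 * real n + 1) * (4 * real n + 2 * real r + 1)))
            * (real ((2*n) choose n) / real ((4*n + 2*r) choose (2*n + r))))
         sums
         (sqrt 2 / 2 * (\<Sum>k=0..r+1. (-1)^k / ((2 * real k + 1) * 2 ^ (2*r - k + 1))
                                      * real ((r+1) choose k) * calB k)
          + varphi (2*r+1) / 2 ^ (2*r+3)
          - 1 / 2 powr (3/2) * (\<Sum>k=0..r-1. (-1)^k / ((2 * real k + 1) * 2 ^ (2*r - k + 1))
                                      * real ((r-1) choose k) * calB k))"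
proof -
  define f where "f m = (\<lambda>y::real.
      wallis_ratio m / (2*(2*real m+1)*(2*real m+3)*4^r) * (1 - y^2)^(2*m+2+r))" for m
  define g where "g y = (2 * ((1 - y^2)^(r+1) * arcsin (1 - y^2)) - (1 - y^2)^(r-1) * arcsin (1 - y^2)
      + (1 - y^2)^r * sqrt (1 - (1 - y^2)^2)) / (8*4^r)" for y :: real
  have "continuous_on {0..1} (f m)" for m
    unfolding f_def by (intro continuous_intros)
  moreover note wallis_integrand_has_integral[of _ r, folded f_def]
  moreover have "norm (f m y) \<le> inverse (real (Suc m) ^ 2)" if "y \<in> {0..1}" for m y
    unfolding f_def using that by (rule wallis_integrand_bound)
  moreover have "summable (\<lambda>m. inverse (real (Suc m) ^ 2))"
    using inverse_power_summable[of 2, where 'a=real] by (subst summable_Suc_iff) simp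
  moreover have "finite {0, 1 :: real}" by simp
  moreover have "(\<lambda>m. f m y) sums g y" if "y \<in> {0..1} - {0, 1}" for y
  proof -
    from that have "0 < 1 - y^2" "1 - y^2 < 1" by (auto simp: abs_square_less_1 power_le_one)
    with assms show ?thesis
      unfolding f_def g_def by (rule wallis_integrand_sums)
  qed
  moreover have "(g has_integral (2 * arcsin_moment (r+1) - arcsin_moment (r-1) + varphi (2*r+1)) / (8*4^r))
      {0..1}"
    unfolding g_def
    by (intro has_integral_divide has_integral_add has_integral_diff has_integral_mult_right
        has_integral_power_arcsin has_integral_power_sqrt)
  ultimately show ?thesis
    unfolding arcsin_moment_combination[OF assms, symmetric] by (rule termwise_integral_sums)
qed

end
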